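(* Let $k_s>0$ and $c_\sigma>0$ with $c_\sigma\neq 1$, and let $\eta$ be a random variable on $(0,\infty)$ with probability density $$f_\eta(\eta)=e^{-k_s^2}\,(1+k_s^2)\,c_\sigma\; e^{\frac{\eta k_s^2}{\eta+c_\sigma}}\;\frac{\eta+\frac{c_\sigma}{1+k_s^2}}{(\eta+c_\sigma)^3},\qquad \eta>0 .$$ Then the average channel capacity per unit bandwidth $\bar C_{h,u}=\mathbb{E}[\log_2(1+\eta)]=\int_0^\infty \log_2(1+\eta)f_\eta(\eta)\,d\eta$ equals $$\bar C_{h,u}=\frac{1}{\log 2}\left(\log\!\left(c_\sigma k_s^2\right)+E_1(k_s^2)+\zeta+\frac{e^{-\frac{c_\sigma k_s^2}{c_\sigma-1}}}{c_\sigma-1}\left(\mathrm{Ei}\!\left(\frac{c_\sigma k_s^2}{c_\sigma-1}\right)-\mathrm{Ei}\!\left(\frac{k_s^2}{c_\sigma-1}\right)\right)\right),$$ where $E_1(x)=\int_x^\infty \frac{e^{-t}}{t}\,dt$ for $x>0$, $\mathrm{Ei}(x)=-\,\mathrm{PV}\!\int_{-x}^{\infty}\frac{e^{-t}}{t}\,dt$ is the standard (principal value) exponential integral, $\zeta\approx 0.577$ is the Euler–Mascheroni constant, and $\log$ is the natural logarithm.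
   Context: Setting: a user $UE0$ is served by two cooperating antenna arrays with zero-forcing position-based joint transmit precoding over Rician channels with factor $K$; its SINR is $\eta=|x_s|^2/|x_I|^2$ with $x_s$ the signal component and $x_I$ the interference-plus-noise component. For fixed channel statistics and fixed user/interferer locations, the paper approximates $x_s$ by a complex Gaussian $\mathcal{CN}(\mu_s,\sigma_s^2)$ and $x_I$ by an independent $\mathcal{CN}(0,\sigma_I^2)$ (moment matching of Gaussian mixtures), which yields the density of $\eta$ displayed in the claim, with $k_s=|\mu_s|/\sigma_s$ (ratio of the absolute mean signal amplitude to its standard deviation) and $c_\sigma=\sigma_s^2/\sigma_I^2$ (ratio of signal variance to interference-plus-noise variance). The average channel capacity per unit bandwidth is $\mathbb{E}[\log_2(1+\eta)]$ under this density. *)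

theory Defs
  imports "HOL-Analysis.Analysis"
begin

definition E1 :: "real \<Rightarrow> real" where
  "E1 x = integral {x..} (\<lambda>t. exp (- t) / t)"

definition pv_exp_int :: "real \<Rightarrow> real" where
  "pv_exp_int a = Lim (at_right 0)
     (\<lambda>\<epsilon>. integral ({a..} - {-\<epsilon><..<\<epsilon>}) (\<lambda>t. exp (- t) / t))"

definition Ei :: "real \<Rightarrow> real" where
  "Ei x = - pv_exp_int (- x)"

definition sinr_density :: "real \<Rightarrow> real \<Rightarrow> real \<Rightarrow> real" where
  "sinr_density ks c x = exp (- ks\<^sup>2) * (1 + ks\<^sup>2) * c * exp (x * ks\<^sup>2 / (x + c))
     * (x + c / (1 + ks\<^sup>2)) / (x + c) ^ 3"

end

theory Submission
  imports Defs "HOL-Real_Asymp.Real_Asymp"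
begin

text \<open>With a = ks^2 the integrand ln (1 + x) * sinr_density ks c x has an explicit primitive
  in terms of exp, Ei and E1 of rational functions of x, so the integral is its limit at infinity
  minus its value at 0. Both exponential integrals are controlled through the entire function
  Ein x = int_0^x (1 - e^(-s))/s ds: E1 v = - gamma - ln v + Ein v, where the constant is identified
  by comparing Ein n with the harmonic number H_n = int_0^n (1 - (1 - s/n)^n)/s ds; and the principal
  value defining Ei evaluates to gamma + ln x - Ein (- x) for x > 0 and to - E1 (- x) for x < 0,
  which gives Ei' x = e^x / x.\<close>

lemma integral_Icc_has_real_derivative:
  fixes g :: "real \<Rightarrow> real"
  assumes "continuous_on UNIV g" "a < x"
  shows "((\<lambda>y. integral {a..y} g) has_real_derivative g x) (at x)"
proof -
  have "((\<lambda>y. integral {a..y} g) has_real_derivative g x) (at x within {a..x+1})"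
    by (rule integral_has_real_derivative) (use assms in \<open>auto intro: continuous_on_subset\<close>)
  moreover have "at x within {a..x+1} = at x"
    using assms by (intro at_within_interior) auto
  ultimately show ?thesis
    by simp
qed

lemma integral_Icc_tendsto_at_right:
  fixes g :: "real \<Rightarrow> real"
  assumes "continuous_on UNIV g"
  shows "((\<lambda>y. integral {a..y} g) \<longlongrightarrow> 0) (at_right a)"
proof -
  have "continuous_on {a..a+1} (\<lambda>y. integral {a..y} g)"
    by (intro indefinite_integral_continuous_1 integrable_continuous_real
        continuous_on_subset[OF assms]) auto
  from continuous_on_Icc_at_rightD[OF this] show ?thesis
    by simp
qed

lemma has_integral_Ioi_FTC_nonneg:
  fixes f F :: "real \<Rightarrow> real"
  assumes "\<And>x. x > a \<Longrightarrow> (F has_real_derivative f x) (at x)"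
    and "\<And>x. x > a \<Longrightarrow> isCont f x"
    and "\<And>x. x > a \<Longrightarrow> 0 \<le> f x"
    and "(F \<longlongrightarrow> A) (at_right a)"
    and "(F \<longlongrightarrow> B) at_top"
  shows "(f has_integral B - A) {a<..}"
proof -
  have "set_integrable lborel (einterval a \<infinity>) f" "(LBINT x=ereal a..\<infinity>. f x) = B - A"
    by (rule interval_integral_FTC_nonneg[where F = F]; use assms in \<open>auto simp: ereal_tendsto_simps\<close>)+
  moreover have "einterval a \<infinity> = {a<..}"
    by auto
  ultimately show ?thesis
    using set_borel_integral_eq_integral[of "{a<..}" f]
    by (simp add: interval_lebesgue_integral_def has_integral_integrable_integral)
qed

lemma exp_minus_power_approx:
  fixes s :: real and n :: nat
  assumes "n > 0" "0 \<le> s" "s \<le> n"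
  shows "(1 - s / n) ^ n \<le> exp (- s)" "exp (- s) - (1 - s / n) ^ n \<le> s\<^sup>2 * exp (- s) / n"
proof -
  have n: "real n > 0"
    using assms by simp
  have sn: "0 \<le> s / n" "s / n \<le> 1"
    using assms n by (auto simp: field_simps)
  have "(1 - s / n) ^ n \<le> exp (- (s / n)) ^ n"
    using sn exp_ge_add_one_self[of "- (s / n)"] by (intro power_mono) auto
  also have "\<dots> = exp (- s)"
    using n by (simp flip: exp_of_nat_mult)
  finally show "(1 - s / n) ^ n \<le> exp (- s)" .
  have "(1 + s / n) ^ n \<le> exp (s / n) ^ n"
    using sn exp_ge_add_one_self[of "s / n"] by (intro power_mono) auto
  also have "\<dots> = exp s"
    using n by (simp flip: exp_of_nat_mult)
  finally have upper: "(1 + s / n) ^ n \<le> exp s" .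
  have "1 - s\<^sup>2 / n = 1 + real n * (- ((s / n)\<^sup>2))"
    using n by (simp add: power2_eq_square)
  also have "\<dots> \<le> (1 + - ((s / n)\<^sup>2)) ^ n"
    using sn by (intro Bernoulli_inequality) (simp add: power_le_one)
  also have "\<dots> = (1 - s / n) ^ n * (1 + s / n) ^ n"
    by (simp add: power2_eq_square algebra_simps flip: power_mult_distrib)
  also have "\<dots> \<le> (1 - s / n) ^ n * exp s"
    using sn upper by (intro mult_left_mono) auto
  finally have "exp (- s) * (1 - s\<^sup>2 / n) \<le> (1 - s / n) ^ n"
    by (simp add: exp_minus field_simps)
  then show "exp (- s) - (1 - s / n) ^ n \<le> s\<^sup>2 * exp (- s) / n"
    by (simp add: algebra_simps)
qed

definition ein_kernel :: "real \<Rightarrow> real" where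
  "ein_kernel s = (if s = 0 then 1 else (1 - exp (- s)) / s)"

lemma isCont_ein_kernel: "isCont ein_kernel x"
proof (cases "x = 0")
  case True
  have "((\<lambda>s::real. (1 - exp (- s)) / s) \<longlongrightarrow> 1) (at 0)"
    by real_asymp
  then have "((\<lambda>s. (1 - exp (- s)) / s) \<longlongrightarrow> ein_kernel 0) (at 0)"
    by (simp add: ein_kernel_def)
  then have "(ein_kernel \<longlongrightarrow> ein_kernel 0) (at 0)"
    by (rule Lim_transform_eventually) (auto simp: eventually_at_filter ein_kernel_def)
  with True show ?thesis
    by (simp add: isCont_def)
next
  case False
  have "\<forall>\<^sub>F s in nhds x. ein_kernel s = (1 - exp (- s)) / s"
    using t1_space_nhds[OF False] by eventually_elim (simp add: ein_kernel_def)
  moreover have "isCont (\<lambda>s. (1 - exp (- s)) / s) x"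
    using False by (intro continuous_intros) auto
  ultimately show ?thesis
    by (simp add: isCont_cong)
qed

lemma continuous_on_ein_kernel: "continuous_on A ein_kernel"
  by (simp add: continuous_at_imp_continuous_on isCont_ein_kernel)

lemma continuous_on_ein_kernel_minus: "continuous_on A (\<lambda>s. ein_kernel (- s))"
  by (intro continuous_on_compose2[OF continuous_on_ein_kernel[of UNIV]] continuous_intros) auto

lemma inverse_minus_ein_kernel: "s \<noteq> 0 \<Longrightarrow> 1 / s - ein_kernel s = exp (- s) / s"
  by (simp add: ein_kernel_def diff_divide_distrib)

text \<open>Ein_reflected x stands for - Ein (- x); it needs its own definition because
  integral {0..x} ranges over the empty set when x < 0.\<close>

definition Ein :: "real \<Rightarrow> real" where
  "Ein x = integral {0..x} ein_kernel"

definition Ein_reflected :: "real \<Rightarrow> real" where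
  "Ein_reflected x = integral {0..x} (\<lambda>s. ein_kernel (- s))"

lemma Ein_has_real_derivative: "x > 0 \<Longrightarrow> (Ein has_real_derivative ein_kernel x) (at x)"
  unfolding Ein_def by (rule integral_Icc_has_real_derivative) (auto simp: continuous_on_ein_kernel)

lemma Ein_reflected_has_real_derivative:
  "x > 0 \<Longrightarrow> (Ein_reflected has_real_derivative ein_kernel (- x)) (at x)"
  unfolding Ein_reflected_def
  by (rule integral_Icc_has_real_derivative[where g = "\<lambda>s. ein_kernel (- s)"])
     (auto simp: continuous_on_ein_kernel_minus)

lemma Ein_tendsto_0: "(Ein \<longlongrightarrow> 0) (at_right 0)"
  unfolding Ein_def by (rule integral_Icc_tendsto_at_right) (rule continuous_on_ein_kernel)

lemma Ein_reflected_tendsto_0: "(Ein_reflected \<longlongrightarrow> 0) (at_right 0)"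
  unfolding Ein_reflected_def by (rule integral_Icc_tendsto_at_right) (rule continuous_on_ein_kernel_minus)

lemma exp_minus_div_integrable_on_Ici:
  fixes w :: real
  assumes "w > 0"
  shows "(\<lambda>t. exp (- t) / t) integrable_on {w..}"
proof (rule measurable_bounded_by_integrable_imp_integrable_real[where g = "\<lambda>t. exp (- 1 * t) / w"])
  show "(\<lambda>t. exp (- t) / t) \<in> borel_measurable (lebesgue_on {w..})"
    using assms by (intro continuous_imp_measurable_on_sets_lebesgue continuous_intros) auto
  show "(\<lambda>t. exp (- 1 * t) / w) integrable_on {w..}"
    by (intro integrable_on_divide integrable_on_exp_minus_to_infinity) auto
  show "\<bar>exp (- t) / t\<bar> \<le> exp (- 1 * t) / w" if "t \<in> {w..}" for t
    using that assms by (auto simp: field_simps)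
qed auto

lemma E1_has_integral: "w > 0 \<Longrightarrow> ((\<lambda>t. exp (- t) / t) has_integral E1 w) {w..}"
  unfolding E1_def by (simp add: exp_minus_div_integrable_on_Ici integrable_integral)

lemma E1_diff_eq:
  assumes "0 < v" "v \<le> w"
  shows "E1 v - E1 w = (ln w - Ein w) - (ln v - Ein v)"
proof -
  have "((\<lambda>t. exp (- t) / t) has_integral (ln w - Ein w) - (ln v - Ein v)) {v..w}"
  proof (rule fundamental_theorem_of_calculus)
    fix t assume "t \<in> {v..w}"
    then have t: "t > 0"
      using assms by auto
    have "((\<lambda>s. ln s - Ein s) has_real_derivative 1 / t - ein_kernel t) (at t)"
      using t by (auto intro!: derivative_eq_intros Ein_has_real_derivative)
    then show "((\<lambda>s. ln s - Ein s) has_vector_derivative exp (- t) / t) (at t within {v..w})"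
      using t by (auto simp: inverse_minus_ein_kernel has_real_derivative_iff_has_vector_derivative
          intro: has_vector_derivative_at_within)
  qed (use assms in auto)
  then have "((\<lambda>t. exp (- t) / t) has_integral (ln w - Ein w) - (ln v - Ein v) + E1 w) ({v..w} \<union> {w..})"
    using assms by (intro has_integral_Un E1_has_integral) auto
  moreover have "{v..w} \<union> {w..} = {v..}"
    using assms by auto
  ultimately have "((\<lambda>t. exp (- t) / t) has_integral (ln w - Ein w) - (ln v - Ein v) + E1 w) {v..}"
    by simp
  then show ?thesis
    using E1_has_integral[of v] assms by (auto dest: has_integral_unique)
qed

lemma E1_eq_Ein_plus_const: "v > 0 \<Longrightarrow> E1 v = (E1 1 - Ein 1) - ln v + Ein v"
  using E1_diff_eq[of v 1] E1_diff_eq[of 1 v] by (cases "v \<le> 1") auto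

text \<open>ein_kernel with exp (- s) replaced by (1 - s/n)^n, written as a polynomial.\<close>

definition ein_kernel_approx :: "nat \<Rightarrow> real \<Rightarrow> real" where
  "ein_kernel_approx n s = (\<Sum>k<n. (1 - s / n) ^ k / n)"

lemma ein_kernel_approx_has_integral:
  assumes "n > 0"
  shows "(ein_kernel_approx n has_integral harm n) {0..real n}"
proof -
  have n: "real n \<noteq> 0"
    using assms by simp
  have "((\<lambda>s. (1 - s / n) ^ k / n) has_integral 1 / real (Suc k)) {0..real n}" for k
  proof -
    let ?F = "\<lambda>s. - ((1 - s / n) ^ Suc k) / real (Suc k)"
    have "((\<lambda>s. (1 - s / n) ^ k / n) has_integral ?F (real n) - ?F 0) {0..real n}"
    proof (rule fundamental_theorem_of_calculus)
      fix t
      have "(?F has_real_derivative - (real (Suc k) * (- (1 / n) * (1 - t / n) ^ k)) / real (Suc k))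
          (at t within {0..real n})"
        using assms by (intro DERIV_cdivide DERIV_minus DERIV_power_Suc derivative_eq_intros) auto
      then show "(?F has_vector_derivative (1 - t / n) ^ k / n) (at t within {0..real n})"
        by (simp add: has_real_derivative_iff_has_vector_derivative del: of_nat_Suc)
    qed simp
    with n show ?thesis
      by simp
  qed
  then have "(ein_kernel_approx n has_integral (\<Sum>k<n. 1 / real (Suc k))) {0..real n}"
    unfolding ein_kernel_approx_def by (intro has_integral_sum) auto
  then show ?thesis
    by (simp add: harm_altdef divide_inverse)
qed

lemma ein_kernel_approx_eq:
  assumes "n > 0" "s \<noteq> 0"
  shows "ein_kernel_approx n s = (1 - (1 - s / n) ^ n) / s"
proof -
  have "1 - (1 - s / n) ^ n = s / n * (\<Sum>k<n. (1 - s / n) ^ k)"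
    using one_diff_power_eq[of "1 - s / n" n] by simp
  then have "(\<Sum>k<n. (1 - s / n) ^ k) / n = (1 - (1 - s / n) ^ n) / s"
    using assms by (simp add: field_simps)
  then show ?thesis
    unfolding ein_kernel_approx_def sum_divide_distrib[symmetric] .
qed

lemma abs_ein_kernel_minus_approx_le:
  assumes "n > 0" "0 \<le> s" "s \<le> n"
  shows "\<bar>ein_kernel s - ein_kernel_approx n s\<bar> \<le> s * exp (- s) / n"
proof (cases "s = 0")
  case True
  with assms show ?thesis
    by (simp add: ein_kernel_def ein_kernel_approx_def)
next
  case False
  then have s: "s > 0"
    using assms by simp
  have "ein_kernel s - ein_kernel_approx n s = - ((exp (- s) - (1 - s / n) ^ n) / s)"
    using s assms by (simp add: ein_kernel_def ein_kernel_approx_eq field_simps)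
  then have "\<bar>ein_kernel s - ein_kernel_approx n s\<bar> = (exp (- s) - (1 - s / n) ^ n) / s"
    using s exp_minus_power_approx(1)[OF assms] by simp
  also have "\<dots> \<le> (s\<^sup>2 * exp (- s) / n) / s"
    using exp_minus_power_approx(2)[OF assms] s by (intro divide_right_mono) auto
  also have "\<dots> = s * exp (- s) / n"
    using s by (simp add: power2_eq_square)
  finally show ?thesis .
qed

lemma abs_Ein_minus_harm_le:
  assumes "n > 0"
  shows "\<bar>Ein n - harm n\<bar> \<le> 1 / n"
proof -
  have int_kernel: "ein_kernel integrable_on {0..real n}"
    by (intro integrable_continuous_real continuous_on_ein_kernel)
  note int_approx = ein_kernel_approx_has_integral[OF assms]
  have int_bound: "((\<lambda>s. s * exp (- s) / n) has_integral
      (- (real n + 1) * exp (- real n) / n) - (- (0 + 1) * exp (- 0) / n)) {0..real n}"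
  proof (rule fundamental_theorem_of_calculus)
    fix t
    have "((\<lambda>s. - (s + 1) * exp (- s) / n) has_real_derivative
        (- 1 * exp (- t) + (- (t + 1)) * (exp (- t) * (- 1))) / n) (at t within {0..real n})"
      using assms by (auto intro!: derivative_eq_intros)
    then show "((\<lambda>s. - (s + 1) * exp (- s) / n) has_vector_derivative t * exp (- t) / n)
        (at t within {0..real n})"
      using assms by (simp add: has_real_derivative_iff_has_vector_derivative algebra_simps)
  qed simp
  have "Ein n - harm n = integral {0..real n} (\<lambda>s. ein_kernel s - ein_kernel_approx n s)"
    unfolding Ein_def
    by (simp add: integral_diff[OF int_kernel has_integral_integrable[OF int_approx]] integral_unique[OF int_approx])
  also have "\<bar>\<dots>\<bar> \<le> integral {0..real n} (\<lambda>s. s * exp (- s) / n)"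
    unfolding real_norm_def[symmetric]
  proof (rule integral_norm_bound_integral)
    show "(\<lambda>s. ein_kernel s - ein_kernel_approx n s) integrable_on {0..real n}"
      using int_kernel int_approx by (intro integrable_diff) auto
  qed (use int_bound abs_ein_kernel_minus_approx_le[OF assms] in auto)
  also have "\<dots> = (1 - (real n + 1) * exp (- real n)) / n"
    unfolding integral_unique[OF int_bound] using assms by (simp add: field_simps)
  also have "\<dots> \<le> 1 / n"
    using assms by (intro divide_right_mono) auto
  finally show ?thesis .
qed

lemma E1_bounds:
  assumes "v \<ge> 1"
  shows "0 \<le> E1 v" "E1 v \<le> exp (- v)"
proof -
  show "0 \<le> E1 v"
    unfolding E1_def
    using assms exp_minus_div_integrable_on_Ici[of v] by (intro integral_nonneg) auto
  have "E1 v \<le> integral {v..} (\<lambda>t. exp (- 1 * t))"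
    unfolding E1_def
    using assms exp_minus_div_integrable_on_Ici[of v] integrable_on_exp_minus_to_infinity[of 1 v]
    by (intro integral_le) (auto simp: divide_le_eq)
  also have "\<dots> = exp (- v)"
    using has_integral_exp_minus_to_infinity[of 1 v] by (simp add: integral_unique)
  finally show "E1 v \<le> exp (- v)" .
qed

lemma E1_1_minus_Ein_1: "E1 1 - Ein 1 = - euler_mascheroni"
proof -
  let ?\<kappa> = "E1 1 - Ein 1"
  have E1_lim: "(\<lambda>n. E1 (real n)) \<longlonglongrightarrow> 0"
  proof (rule Lim_null_comparison)
    show "\<forall>\<^sub>F n in sequentially. norm (E1 (real n)) \<le> exp (- real n)"
      using eventually_gt_at_top[of 0] by eventually_elim (simp add: E1_bounds)
    show "(\<lambda>n. exp (- real n)) \<longlonglongrightarrow> 0"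
      by real_asymp
  qed
  have Ein_lim: "(\<lambda>n. harm n - Ein (real n)) \<longlonglongrightarrow> 0"
  proof (rule Lim_null_comparison)
    show "\<forall>\<^sub>F n in sequentially. norm (harm n - Ein (real n)) \<le> 1 / real n"
      using eventually_gt_at_top[of 0]
    proof eventually_elim
      case (elim n)
      then show ?case
        using abs_Ein_minus_harm_le[of n] by (simp add: abs_minus_commute)
    qed
    show "(\<lambda>n. 1 / real n) \<longlonglongrightarrow> 0"
      by real_asymp
  qed
  have "(\<lambda>n. E1 (real n) - (harm n - ln (real n)) + (harm n - Ein (real n))) \<longlonglongrightarrow> 0 - euler_mascheroni + 0"
    by (intro tendsto_intros E1_lim Ein_lim euler_mascheroni_LIMSEQ)
  moreover have "\<forall>\<^sub>F n in sequentially. E1 (real n) - (harm n - ln (real n)) + (harm n - Ein (real n)) = ?\<kappa>"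
    using eventually_gt_at_top[of 0]
  proof eventually_elim
    case (elim n)
    then show ?case
      using E1_eq_Ein_plus_const[of "real n"] by simp
  qed
  ultimately have "(\<lambda>n. ?\<kappa>) \<longlonglongrightarrow> - euler_mascheroni"
    using tendsto_cong by force
  then show ?thesis
    by (rule LIMSEQ_const_iff[THEN iffD1])
qed

lemma E1_eq_Ein: "v > 0 \<Longrightarrow> E1 v = - euler_mascheroni - ln v + Ein v"
  using E1_eq_Ein_plus_const E1_1_minus_Ein_1 by simp

lemma E1_has_real_derivative:
  assumes "v > 0"
  shows "(E1 has_real_derivative - (exp (- v) / v)) (at v)"
proof -
  have "((\<lambda>x. - euler_mascheroni - ln x + Ein x) has_real_derivative - (1 / v - ein_kernel v)) (at v)"
    using assms by (auto intro!: derivative_eq_intros Ein_has_real_derivative)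
  then have "((\<lambda>x. - euler_mascheroni - ln x + Ein x) has_real_derivative - (exp (- v) / v)) (at v)"
    using assms by (simp add: inverse_minus_ein_kernel)
  then show ?thesis
    by (rule has_field_derivative_transform_within_open[where S = "{0<..}"]) (use assms E1_eq_Ein in auto)
qed

lemma Ei_eq_minus_E1:
  assumes "t < 0"
  shows "Ei t = - E1 (- t)"
proof -
  have "\<forall>\<^sub>F e in at_right 0. integral ({- t..} - {- e<..<e}) (\<lambda>s. exp (- s) / s) = E1 (- t)"
    using assms unfolding eventually_at_right_field
    by (intro exI[of _ "- t"]) (auto simp: E1_def intro!: arg_cong2[where f = integral])
  then have "((\<lambda>e. integral ({- t..} - {- e<..<e}) (\<lambda>s. exp (- s) / s)) \<longlongrightarrow> E1 (- t)) (at_right 0)"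
    by (rule tendsto_eventually)
  then have "pv_exp_int (- t) = E1 (- t)"
    unfolding pv_exp_int_def by (intro tendsto_Lim) auto
  then show ?thesis
    by (simp add: Ei_def)
qed

lemma pv_integral_exp_minus_div:
  assumes "0 < e" "e < x"
  shows "integral ({- x..} - {- e<..<e}) (\<lambda>s. exp (- s) / s)
    = (ln e + Ein_reflected e) - (ln x + Ein_reflected x) + E1 e"
proof -
  have "((\<lambda>s. exp (- s) / s) has_integral (ln e + Ein_reflected e) - (ln x + Ein_reflected x)) {- x..- e}"
  proof -
    have "((\<lambda>s. exp (- s) / s) has_integral
        (ln (- (- e)) + Ein_reflected (- (- e))) - (ln (- (- x)) + Ein_reflected (- (- x)))) {- x..- e}"
    proof (rule fundamental_theorem_of_calculus)
      fix t assume "t \<in> {- x..- e}"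
      then have t: "t < 0"
        using assms by auto
      have "((\<lambda>s. ln (- s) + Ein_reflected (- s)) has_real_derivative 1 / t - ein_kernel t) (at t)"
        using t by (auto intro!: derivative_eq_intros DERIV_chain2[OF Ein_reflected_has_real_derivative])
      then show "((\<lambda>s. ln (- s) + Ein_reflected (- s)) has_vector_derivative exp (- t) / t) (at t within {- x..- e})"
        using t by (auto simp: inverse_minus_ein_kernel has_real_derivative_iff_has_vector_derivative
            intro: has_vector_derivative_at_within)
    qed (use assms in auto)
    then show ?thesis
      by simp
  qed
  then have "((\<lambda>s. exp (- s) / s) has_integral (ln e + Ein_reflected e) - (ln x + Ein_reflected x) + E1 e)
      ({- x..- e} \<union> {e..})"
    using assms by (intro has_integral_Un E1_has_integral) auto
  moreover have "{- x..} - {- e<..<e} = {- x..- e} \<union> {e..}"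
    using assms by auto
  ultimately show ?thesis
    by (simp add: integral_unique)
qed

lemma Ei_eq_Ein_reflected:
  assumes "x > 0"
  shows "Ei x = euler_mascheroni + ln x + Ein_reflected x"
proof -
  have "\<forall>\<^sub>F e in at_right 0. integral ({- x..} - {- e<..<e}) (\<lambda>s. exp (- s) / s)
      = Ein_reflected e + Ein e - ln x - Ein_reflected x - euler_mascheroni"
    using assms unfolding eventually_at_right_field
    by (intro exI[of _ x]) (auto simp: pv_integral_exp_minus_div E1_eq_Ein)
  moreover have "((\<lambda>e. Ein_reflected e + Ein e - ln x - Ein_reflected x - euler_mascheroni)
      \<longlongrightarrow> 0 + 0 - ln x - Ein_reflected x - euler_mascheroni) (at_right 0)"
    by (intro tendsto_intros Ein_reflected_tendsto_0 Ein_tendsto_0)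
  ultimately have "((\<lambda>e. integral ({- x..} - {- e<..<e}) (\<lambda>s. exp (- s) / s))
      \<longlongrightarrow> - ln x - Ein_reflected x - euler_mascheroni) (at_right 0)"
    using tendsto_cong by force
  then have "pv_exp_int (- x) = - ln x - Ein_reflected x - euler_mascheroni"
    unfolding pv_exp_int_def by (intro tendsto_Lim) auto
  then show ?thesis
    by (simp add: Ei_def)
qed

lemma Ei_has_real_derivative:
  assumes "t \<noteq> 0"
  shows "(Ei has_real_derivative exp t / t) (at t)"
proof (cases "t > 0")
  case True
  have "1 / t + ein_kernel (- t) = exp t / t"
    using inverse_minus_ein_kernel[of "- t"] True by simp
  then have "((\<lambda>s. euler_mascheroni + ln s + Ein_reflected s) has_real_derivative exp t / t) (at t)"
    using True by (auto intro!: derivative_eq_intros Ein_reflected_has_real_derivative)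
  then show ?thesis
    by (rule has_field_derivative_transform_within_open[where S = "{0<..}"]) (use True Ei_eq_Ein_reflected in auto)
next
  case False
  with assms have t: "t < 0"
    by simp
  have "((\<lambda>s. - E1 (- s)) has_real_derivative - (- (exp (- (- t)) / (- t)) * (- 1))) (at t)"
    using t by (auto intro!: derivative_eq_intros DERIV_chain2[OF E1_has_real_derivative])
  then have "((\<lambda>s. - E1 (- s)) has_real_derivative exp t / t) (at t)"
    by simp
  then show ?thesis
    by (rule has_field_derivative_transform_within_open[where S = "{..<0}"]) (use t Ei_eq_minus_E1 in auto)
qed

lemma sinr_density_eq:
  assumes "x + c \<noteq> 0"
  shows "sinr_density ks c x = exp (- (ks\<^sup>2 * c / (x + c))) * c * ((1 + ks\<^sup>2) * x + c) / (x + c) ^ 3"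
proof -
  have "1 + ks\<^sup>2 \<noteq> 0"
    by (metis add_pos_nonneg zero_less_one less_irrefl zero_le_power2)
  then have "(1 + ks\<^sup>2) * (x + c / (1 + ks\<^sup>2)) = (1 + ks\<^sup>2) * x + c"
    by (simp add: field_simps)
  moreover have "exp (- ks\<^sup>2) * exp (x * ks\<^sup>2 / (x + c)) = exp (- (ks\<^sup>2 * c / (x + c)))"
    using assms by (simp add: field_simps flip: exp_add)
  moreover have "sinr_density ks c x = (exp (- ks\<^sup>2) * exp (x * ks\<^sup>2 / (x + c))) * c
      * ((1 + ks\<^sup>2) * (x + c / (1 + ks\<^sup>2))) / (x + c) ^ 3"
    unfolding sinr_density_def by (simp only: mult_ac)
  ultimately show ?thesis
    by simp
qed

definition capacity_primitive :: "real \<Rightarrow> real \<Rightarrow> real \<Rightarrow> real" where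
  "capacity_primitive a c x =
     ln (1 + x) * (x / (x + c)) * exp (- (a * c / (x + c)))
     + exp (- (c * a / (c - 1))) / (c - 1) * Ei (c * a / (c - 1) - a * c / (x + c))
     - E1 (a * c / (x + c))"

lemma capacity_Ei_term_has_real_derivative:
  fixes a c x :: real
  assumes a: "a > 0" and c: "c > 0" "c \<noteq> 1" and x: "x \<ge> 0"
  shows "((\<lambda>x. exp (- (c * a / (c - 1))) / (c - 1) * Ei (c * a / (c - 1) - a * c / (x + c)))
      has_real_derivative exp (- (a * c / (x + c))) / ((1 + x) * (x + c))) (at x)"
proof -
  have xc: "x + c > 0"
    using c x by simp
  have w_eq: "c * a / (c - 1) - a * c / (x + c) = c * a * (x + 1) / ((c - 1) * (x + c))"
    using c xc by (simp add: field_simps)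
  have w: "c * a / (c - 1) - a * c / (x + c) \<noteq> 0"
    unfolding w_eq using a c x xc by simp
  have dW: "((\<lambda>x. c * a / (c - 1) - a * c / (x + c)) has_real_derivative a * c / (x + c)\<^sup>2) (at x)"
    using xc by (auto intro!: derivative_eq_intros simp: power2_eq_square)
  define P where "P = exp (c * a / (c - 1))"
  define E where "E = exp (- (a * c / (x + c)))"
  have "P > 0"
    unfolding P_def by simp
  have "exp (c * a / (c - 1) - a * c / (x + c)) = P * E"
    unfolding P_def E_def by (simp flip: exp_add)
  moreover have "exp (- (c * a / (c - 1))) = 1 / P"
    unfolding P_def by (simp add: exp_minus divide_inverse)
  moreover have "1 / P / (c - 1) * (P * E / (c * a * (x + 1) / ((c - 1) * (x + c))) * (a * c / (x + c)\<^sup>2))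
      = E / ((1 + x) * (x + c))"
    using a c x xc \<open>P > 0\<close> by (simp add: divide_simps; simp add: algebra_simps power2_eq_square)
  ultimately show ?thesis
    using DERIV_cmult[OF DERIV_chain2[OF Ei_has_real_derivative[OF w] dW], of "exp (- (c * a / (c - 1))) / (c - 1)"]
    by (simp add: w_eq E_def)
qed

lemma capacity_primitive_has_real_derivative:
  fixes a c x :: real
  assumes a: "a > 0" and c: "c > 0" "c \<noteq> 1" and x: "x \<ge> 0"
  shows "(capacity_primitive a c has_real_derivative
    ln (1 + x) * (exp (- (a * c / (x + c))) * c * ((1 + a) * x + c) / (x + c) ^ 3)) (at x)"
proof -
  have xc: "x + c > 0"
    using c x by simp
  have x1: "1 + x > 0"
    using x by simp
  have d1: "((\<lambda>x. ln (1 + x) * (x / (x + c)) * exp (- (a * c / (x + c)))) has_real_derivative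
      x * exp (- (a * c / (x + c))) / ((1 + x) * (x + c))
      + ln (1 + x) * (exp (- (a * c / (x + c))) * c * ((1 + a) * x + c) / (x + c) ^ 3)) (at x)"
    using x1 xc by (auto intro!: derivative_eq_intros)
      (simp add: divide_simps; simp add: algebra_simps power2_eq_square power3_eq_cube)
  have dv: "((\<lambda>x. a * c / (x + c)) has_real_derivative - (a * c / (x + c)\<^sup>2)) (at x)"
    using xc by (auto intro!: derivative_eq_intros simp: power2_eq_square)
  have d3: "((\<lambda>x. E1 (a * c / (x + c))) has_real_derivative exp (- (a * c / (x + c))) / (x + c)) (at x)"
  proof -
    have "- (exp (- (a * c / (x + c))) / (a * c / (x + c))) * - (a * c / (x + c)\<^sup>2)
        = exp (- (a * c / (x + c))) / (x + c)"
      using a c xc by (simp add: power2_eq_square)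
    then show ?thesis
      using DERIV_chain2[OF E1_has_real_derivative dv] a c xc by simp
  qed
  \<comment> \<open>the Ei and E1 terms absorb the part of d1 that is free of ln (1 + x)\<close>
  have cancel: "x * exp (- (a * c / (x + c))) / ((1 + x) * (x + c)) + exp (- (a * c / (x + c))) / ((1 + x) * (x + c))
      = exp (- (a * c / (x + c))) / (x + c)"
    using x1 xc by (simp add: divide_simps; simp add: algebra_simps)
  show ?thesis
    unfolding capacity_primitive_def
    by (rule DERIV_cong[OF DERIV_diff[OF DERIV_add[OF d1 capacity_Ei_term_has_real_derivative[OF a c x]] d3]])
       (use cancel in linarith)
qed

lemma capacity_primitive_at_0:
  assumes "c > 0" "c \<noteq> 1"
  shows "capacity_primitive a c 0 = exp (- (c * a / (c - 1))) / (c - 1) * Ei (a / (c - 1)) - E1 a"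
proof -
  have "c * a / (c - 1) - a * c / c = a / (c - 1)"
    using assms by (simp add: field_simps)
  with assms show ?thesis
    unfolding capacity_primitive_def by simp
qed

lemma capacity_primitive_tendsto_at_top:
  assumes a: "a > 0" and c: "c > 0" "c \<noteq> 1"
  shows "(capacity_primitive a c \<longlongrightarrow>
    euler_mascheroni + ln (a * c) + exp (- (c * a / (c - 1))) / (c - 1) * Ei (c * a / (c - 1))) at_top"
proof -
  let ?K = "exp (- (c * a / (c - 1))) / (c - 1)"
  have v_lim: "filterlim (\<lambda>x. a * c / (x + c)) (at_right 0) at_top"
    using a c by real_asymp
  have eventually_eq: "\<forall>\<^sub>F x in at_top. capacity_primitive a c x =
      (ln (1 + x) * (x / (x + c)) * exp (- (a * c / (x + c))) - ln (x + c))
      + ?K * Ei (c * a / (c - 1) - a * c / (x + c)) + euler_mascheroni + ln (a * c) - Ein (a * c / (x + c))"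
    using eventually_gt_at_top[of 0]
  proof eventually_elim
    case (elim x)
    then have "ln (a * c / (x + c)) = ln (a * c) - ln (x + c)"
      using a c by (simp add: ln_div)
    then show ?case
      unfolding capacity_primitive_def using a c elim by (simp add: E1_eq_Ein)
  qed
  have "((\<lambda>x. (ln (1 + x) * (x / (x + c)) * exp (- (a * c / (x + c))) - ln (x + c))
      + ?K * Ei (c * a / (c - 1) - a * c / (x + c)) + euler_mascheroni + ln (a * c) - Ein (a * c / (x + c)))
    \<longlongrightarrow> 0 + ?K * Ei (c * a / (c - 1) - 0) + euler_mascheroni + ln (a * c) - 0) at_top"
  proof (intro tendsto_intros isCont_tendsto_compose[of _ Ei] filterlim_compose[OF Ein_tendsto_0 v_lim])
    show "((\<lambda>x. ln (1 + x) * (x / (x + c)) * exp (- (a * c / (x + c))) - ln (x + c)) \<longlongrightarrow> 0) at_top"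
      using a c by real_asymp
    show "isCont Ei (c * a / (c - 1) - 0)"
      using a c by (intro DERIV_isCont[OF Ei_has_real_derivative]) simp
    show "((\<lambda>x. a * c / (x + c)) \<longlongrightarrow> 0) at_top"
      using a c by real_asymp
  qed
  then show ?thesis
    unfolding tendsto_cong[OF eventually_eq] by (simp add: algebra_simps)
qed

lemma capacity_integrand_has_integral:
  fixes ks c :: real
  assumes ks: "ks > 0" and c: "c > 0" "c \<noteq> 1"
  shows "((\<lambda>x. ln (1 + x) * sinr_density ks c x) has_integral
      euler_mascheroni + ln (ks\<^sup>2 * c) + exp (- (c * ks\<^sup>2 / (c - 1))) / (c - 1) * Ei (c * ks\<^sup>2 / (c - 1))
      - capacity_primitive (ks\<^sup>2) c 0) {0<..}"
proof -
  have a: "ks\<^sup>2 > 0"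
    using ks by simp
  show ?thesis
  proof (rule has_integral_Ioi_FTC_nonneg)
    fix x :: real
    assume x: "x > 0"
    show "(capacity_primitive (ks\<^sup>2) c has_real_derivative ln (1 + x) * sinr_density ks c x) (at x)"
      using capacity_primitive_has_real_derivative[OF a c] x c by (simp add: sinr_density_eq)
    show "isCont (\<lambda>x. ln (1 + x) * sinr_density ks c x) x"
      using x c unfolding sinr_density_def by (auto intro!: continuous_intros)
    show "0 \<le> ln (1 + x) * sinr_density ks c x"
      using x c by (simp add: sinr_density_eq)
  next
    show "(capacity_primitive (ks\<^sup>2) c \<longlongrightarrow> capacity_primitive (ks\<^sup>2) c 0) (at_right 0)"
      using capacity_primitive_has_real_derivative[OF a c, of 0]
      by (intro tendsto_within_subset[OF DERIV_isCont[unfolded isCont_def]]) auto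
  qed (rule capacity_primitive_tendsto_at_top[OF a c])
qed

theorem theorem1:
  fixes ks c :: real
  assumes "ks > 0" and "c > 0" and "c \<noteq> 1"
  shows "((\<lambda>x. log 2 (1 + x) * sinr_density ks c x) has_integral
          (1 / ln 2) * (ln (c * ks\<^sup>2) + E1 (ks\<^sup>2) + euler_mascheroni
            + exp (- (c * ks\<^sup>2 / (c - 1))) / (c - 1)
              * (Ei (c * ks\<^sup>2 / (c - 1)) - Ei (ks\<^sup>2 / (c - 1))))) {0<..}"
proof -
  have difference_eq: "euler_mascheroni + ln (ks\<^sup>2 * c) + exp (- (c * ks\<^sup>2 / (c - 1))) / (c - 1) * Ei (c * ks\<^sup>2 / (c - 1))
      - capacity_primitive (ks\<^sup>2) c 0
    = ln (c * ks\<^sup>2) + E1 (ks\<^sup>2) + euler_mascheroni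
      + exp (- (c * ks\<^sup>2 / (c - 1))) / (c - 1) * (Ei (c * ks\<^sup>2 / (c - 1)) - Ei (ks\<^sup>2 / (c - 1)))"
    unfolding capacity_primitive_at_0[OF assms(2,3)] by (simp add: algebra_simps)
  show ?thesis
    using has_integral_divide[OF capacity_integrand_has_integral[OF assms], of "ln 2"]
    unfolding difference_eq by (simp add: log_def)
qed

end
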